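(* Define $s(n)$ by $$\sum_{n=0}^{\infty}s(n)q^n=\sum_{n=0}^{\infty}\frac{(-1;q^2)_nq^{n(n+1)}}{(q;q)_{2n}}=\frac{(-q^2;q^2)_\infty}{(q^2;q^2)_\infty}(q^6,-q^3,-q^3;q^6)_\infty.$$ Then for all integers $n\ge0$: $$s(24n+i)\equiv0\pmod4\ \ (i=9,15,21),\qquad s(24n+23)\equiv0\pmod8,\qquad s(24n+17)\equiv0\pmod8,\qquad s(12n+1)\equiv0\pmod{16}.$$
   Context: $(A;q)_0=1$, $(A;q)_n=\prod_{j=0}^{n-1}(1-Aq^j)$, $(A;q)_\infty=\prod_{j\ge0}(1-Aq^j)$, and $(A_1,\dots,A_r;q)_\infty=\prod_i(A_i;q)_\infty$. *)

theory Defs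
  imports "HOL-Computational_Algebra.Formal_Power_Series"
begin

definition qpoch :: "int fps \<Rightarrow> int fps \<Rightarrow> nat \<Rightarrow> int fps" where
  "qpoch a b n = (\<Prod>j<n. 1 - a * b ^ j)"

(* the formal power series expansion of 1/(1 - q^j), j >= 1 (geometric series) *)
definition inv_one_minus_Xpow :: "nat \<Rightarrow> int fps" where
  "inv_one_minus_Xpow j = Abs_fps (\<lambda>m. if j dvd m then 1 else 0)"

definition inv_qpoch_q :: "nat \<Rightarrow> int fps" where
  "inv_qpoch_q m = (\<Prod>j\<in>{1..m}. inv_one_minus_Xpow j)"

definition s_term :: "nat \<Rightarrow> int fps" where
  "s_term k = qpoch (-1) (fps_X ^ 2) k * fps_X ^ (k * (k + 1)) * inv_qpoch_q (2 * k)"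

(* s(n) = coefficient of q^n in sum_{k>=0} s_term k; summands with k > n have
   order k(k+1) > n, so the sum may be truncated at k = n. *)
definition s :: "nat \<Rightarrow> int" where
  "s n = (\<Sum>k\<le>n. fps_nth (s_term k) n)"


end

(*
  Write S(q) = sum_n s(n) q^n and theta_{c,a}(q) = 1 + 2 sum_{r>=1} c^r q^(a r^2) (theta c a
  below). Bailey's lemma with b = q, applied to the unit Bailey pair, gives the Bailey pair with
  beta_n = 1/(q;q)_(2n); Bailey's lemma with b = -q^2, applied to both pairs, then yields
  S(q) theta_{-1,2}(q) = theta_{1,3}(q). As theta_{-1,2} = (q^2;q^2)_inf / (-q^2;q^2)_inf and
  theta_{1,3} = (q^6,-q^3,-q^3;q^6)_inf by the triple product identity, this is the product
  formula of the statement. The infinite sums are handled by proving the identities obtained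
  after multiplying by (q^2;q^2)_n and comparing coefficients up to q^n.

  Write theta_{-1,2} = 1 + 2T and theta_{1,3} = 1 + 2U. Modulo 16,
  S = (1 + 2U)(1 - 2T + 4T^2 - 8T^3), and T is a series in q^2, so for odd N,
  s(N) = 2 U_N - 4 (UT)_N + 8 (UT^2)_N modulo 16. Moreover T^2 = T(q^2) modulo 2. These
  coefficients vanish unless N has the form 3a^2, 3a^2 + 2b^2 and 3a^2 + 4b^2 respectively, and
  these forms are excluded modulo 24 in the progressions at hand.
*)

theory Submission
  imports Defs
begin

unbundle fps_syntax

section \<open>Gaussian binomial coefficients\<close>

definition qfact :: "'a::comm_ring_1 \<Rightarrow> nat \<Rightarrow> 'a" where
  "qfact Q k = (\<Prod>i=1..k. 1 - Q ^ i)"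

lemma qfact_0 [simp]: "qfact Q 0 = 1"
  by (simp add: qfact_def)

lemma qfact_Suc: "qfact Q (Suc k) = qfact Q k * (1 - Q ^ Suc k)"
  by (simp add: qfact_def)

lemma qfact_split: "a \<le> b \<Longrightarrow> qfact Q b = qfact Q a * (\<Prod>i=Suc a..b. 1 - Q ^ i)"
  unfolding qfact_def using prod.ub_add_nat[of 1 a _ "b - a"] by simp

fun qbinomial :: "'a::comm_ring_1 \<Rightarrow> nat \<Rightarrow> nat \<Rightarrow> 'a" where
  "qbinomial Q 0 m = (if m = 0 then 1 else 0)"
| "qbinomial Q (Suc N) m =
     qbinomial Q N m + (case m of 0 \<Rightarrow> 0 | Suc k \<Rightarrow> Q ^ (N - k) * qbinomial Q N k)"

lemma qbinomial_eq_0: "N < m \<Longrightarrow> qbinomial Q N m = 0"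
  by (induction N arbitrary: m) (auto split: nat.splits)

lemma qbinomial_0_right [simp]: "qbinomial Q N 0 = 1"
  by (induction N) auto

lemma qbinomial_mult_qfact:
  "m \<le> N \<Longrightarrow> qbinomial Q N m * qfact Q m * qfact Q (N - m) = qfact Q N"
proof (induction N arbitrary: m)
  case (Suc N)
  show ?case
  proof (cases m)
    case (Suc k)
    have IH_k: "qbinomial Q N k * qfact Q k * qfact Q (N - k) = qfact Q N"
      using Suc.IH[of k] Suc.prems \<open>m = Suc k\<close> by simp
    show ?thesis
    proof (cases "m = Suc N")
      case True
      then have "qbinomial Q N N * qfact Q N = qfact Q N"
        using IH_k \<open>m = Suc k\<close> by simp
      with True show ?thesis
        by (simp add: qbinomial_eq_0 qfact_Suc mult.assoc[symmetric])
    next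
      case False
      then have "m \<le> N" using Suc.prems by simp
      then have IH_m: "qbinomial Q N m * qfact Q m * qfact Q (N - m) = qfact Q N"
        using Suc.IH by simp
      have N_k: "N - k = Suc (N - m)" and SucN_m: "Suc N - m = Suc (N - m)"
        using \<open>m \<le> N\<close> \<open>m = Suc k\<close> by auto
      have "qbinomial Q (Suc N) m * qfact Q m * qfact Q (Suc N - m)
          = qbinomial Q N m * qfact Q m * qfact Q (N - m) * (1 - Q ^ Suc (N - m))
            + Q ^ (N - k) * (qbinomial Q N k * qfact Q k * qfact Q (N - k)) * (1 - Q ^ m)"
        using \<open>m = Suc k\<close> N_k SucN_m by (simp add: qfact_Suc algebra_simps)
      also have "\<dots> = qfact Q N * (1 - Q ^ Suc (N - m)) + Q ^ Suc (N - m) * qfact Q N * (1 - Q ^ m)"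
        by (simp only: IH_k[unfolded N_k] IH_m N_k)
      also have "\<dots> = qfact Q N * (1 - Q ^ (Suc (N - m) + m))"
        by (simp add: algebra_simps power_add)
      also have "Suc (N - m) + m = Suc N" using \<open>m \<le> N\<close> by simp
      finally show ?thesis by (simp add: qfact_Suc)
    qed
  qed simp
qed simp

definition qsign :: "'a::comm_ring_1 \<Rightarrow> nat \<Rightarrow> 'a" where
  "qsign Q m = (-1) ^ m * Q ^ (m choose 2)"

lemma qsign_0 [simp]: "qsign Q 0 = 1"
  by (simp add: qsign_def numeral_2_eq_2)

lemma choose_two_Suc: "Suc k choose 2 = (k choose 2) + k"
  by (simp add: numeral_2_eq_2)

lemma qsign_Suc: "qsign Q (Suc k) = - (Q ^ k * qsign Q k)"
  by (simp add: qsign_def choose_two_Suc power_add algebra_simps)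

lemma choose_two_add: "(m + r) choose 2 = (m choose 2) + (r choose 2) + m * r"
  by (induction m) (auto simp: choose_two_Suc algebra_simps)

lemma qsign_add: "qsign Q (m + r) = qsign Q m * qsign Q r * Q ^ (m * r)"
  by (simp add: qsign_def choose_two_add power_add algebra_simps)

lemma two_times_choose_two: "2 * (m choose 2) = m * (m - 1)"
proof -
  have "even (m * (m - 1))" by (cases m) auto
  then show ?thesis by (simp add: choose_two)
qed

lemma qsign_square: "qsign Q r * qsign Q r = Q ^ (r * (r - 1))"
proof -
  have "qsign Q r * qsign Q r = ((-1) ^ r * (-1) ^ r) * Q ^ (2 * (r choose 2))"
    by (simp add: qsign_def mult_2 power_add algebra_simps)
  then show ?thesis
    by (simp add: two_times_choose_two flip: power_add)
qed

lemma sum_qbinomial_Suc: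
  "(\<Sum>m\<le>Suc N. qbinomial Q (Suc N) m * f m)
     = (\<Sum>m\<le>N. qbinomial Q N m * (f m + Q ^ (N - m) * f (Suc m)))"
proof -
  have "(\<Sum>m\<le>Suc N. qbinomial Q (Suc N) m * f m)
      = (\<Sum>m\<le>Suc N. qbinomial Q N m * f m)
        + (\<Sum>m\<le>Suc N. (case m of 0 \<Rightarrow> 0 | Suc k \<Rightarrow> Q ^ (N - k) * qbinomial Q N k) * f m)"
    by (simp add: sum.distrib[symmetric] algebra_simps)
  also have "(\<Sum>m\<le>Suc N. qbinomial Q N m * f m) = (\<Sum>m\<le>N. qbinomial Q N m * f m)"
    by (simp add: qbinomial_eq_0)
  also have "(\<Sum>m\<le>Suc N. (case m of 0 \<Rightarrow> 0 | Suc k \<Rightarrow> Q ^ (N - k) * qbinomial Q N k) * f m)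
      = (\<Sum>m\<le>N. Q ^ (N - m) * qbinomial Q N m * f (Suc m))"
    by (subst sum.atMost_Suc_shift) simp
  finally show ?thesis
    by (simp add: sum.distrib[symmetric] algebra_simps)
qed

theorem qbinomial_theorem:
  "(\<Sum>m\<le>N. qbinomial Q N m * (qsign Q m * x ^ m * y ^ (N - m))) = (\<Prod>i<N. y - x * Q ^ i)"
proof (induction N)
  case (Suc N)
  have step: "qsign Q m * x ^ m * y ^ (Suc N - m)
        + Q ^ (N - m) * (qsign Q (Suc m) * x ^ Suc m * y ^ (Suc N - Suc m))
      = (y - x * Q ^ N) * (qsign Q m * x ^ m * y ^ (N - m))" if "m \<le> N" for m
  proof -
    have "Q ^ N = Q ^ m * Q ^ (N - m)" using that by (simp flip: power_add)
    then show ?thesis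
      using that by (simp add: qsign_Suc Suc_diff_le algebra_simps)
  qed
  have "(\<Sum>m\<le>Suc N. qbinomial Q (Suc N) m * (qsign Q m * x ^ m * y ^ (Suc N - m)))
      = (\<Sum>m\<le>N. qbinomial Q N m * ((y - x * Q ^ N) * (qsign Q m * x ^ m * y ^ (N - m))))"
    unfolding sum_qbinomial_Suc by (rule sum.cong[OF refl]) (simp only: atMost_iff step)
  also have "\<dots> = (y - x * Q ^ N) * (\<Sum>m\<le>N. qbinomial Q N m * (qsign Q m * x ^ m * y ^ (N - m)))"
    by (simp add: sum_distrib_left ac_simps)
  also have "\<dots> = (\<Prod>i<Suc N. y - x * Q ^ i)"
    unfolding Suc.IH by (simp add: mult.commute)
  finally show ?case .
qed simp

text \<open>For e = 0 this is the q-binomial theorem; Bailey's lemma below uses it with e = Q^(2r).\<close>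

theorem qbinomial_theorem_deformed:
  "(\<Sum>m\<le>N. qbinomial Q N m *
      (qsign Q m * (\<Prod>i=1..m. x - e * Q ^ i) * (\<Prod>i=Suc m..N. 1 - e * Q ^ i)))
    = (\<Prod>i<N. 1 - x * Q ^ i)"
proof (induction N arbitrary: e)
  case (Suc N)
  define t where
    "t e m = qsign Q m * (\<Prod>i=1..m. x - e * Q ^ i) * (\<Prod>i=Suc m..N. 1 - e * Q ^ i)" for e m
  have step: "qsign Q m * (\<Prod>i=1..m. x - e * Q ^ i) * (\<Prod>i=Suc m..Suc N. 1 - e * Q ^ i)
        + Q ^ (N - m) * (qsign Q (Suc m) * (\<Prod>i=1..Suc m. x - e * Q ^ i)
                           * (\<Prod>i=Suc (Suc m)..Suc N. 1 - e * Q ^ i))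
      = (1 - e * Q ^ Suc N) * t e m - Q ^ N * (x - e * Q) * t (e * Q) m" if "m \<le> N" for m
  proof -
    have head: "(\<Prod>i=1..Suc m. x - e * Q ^ i) = (x - e * Q) * (\<Prod>i=1..m. x - e * Q * Q ^ i)"
    proof -
      have "(\<Prod>i=1..Suc m. x - e * Q ^ i) = (x - e * Q) * (\<Prod>i=Suc 1..Suc m. x - e * Q ^ i)"
        by (subst prod.atLeast_Suc_atMost) auto
      then show ?thesis
        by (simp only: prod.shift_bounds_cl_Suc_ivl) (simp add: algebra_simps)
    qed
    have shift: "(\<Prod>i=Suc (Suc m)..Suc N. 1 - e * Q ^ i) = (\<Prod>i=Suc m..N. 1 - e * Q * Q ^ i)"
      by (subst prod.shift_bounds_cl_Suc_ivl) (simp add: algebra_simps)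
    have last: "(\<Prod>i=Suc m..Suc N. 1 - e * Q ^ i) = (\<Prod>i=Suc m..N. 1 - e * Q ^ i) * (1 - e * Q ^ Suc N)"
      using that by (simp add: prod.nat_ivl_Suc')
    have "Q ^ N = Q ^ (N - m) * Q ^ m" using that by (simp flip: power_add)
    then show ?thesis
      unfolding head shift last t_def qsign_Suc by (simp add: algebra_simps)
  qed
  have "(\<Sum>m\<le>Suc N. qbinomial Q (Suc N) m *
          (qsign Q m * (\<Prod>i=1..m. x - e * Q ^ i) * (\<Prod>i=Suc m..Suc N. 1 - e * Q ^ i)))
      = (\<Sum>m\<le>N. qbinomial Q N m * ((1 - e * Q ^ Suc N) * t e m - Q ^ N * (x - e * Q) * t (e * Q) m))"
    unfolding sum_qbinomial_Suc by (rule sum.cong[OF refl]) (simp only: atMost_iff step)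
  also have "\<dots> = (1 - e * Q ^ Suc N) * (\<Sum>m\<le>N. qbinomial Q N m * t e m)
                   - Q ^ N * (x - e * Q) * (\<Sum>m\<le>N. qbinomial Q N m * t (e * Q) m)"
    unfolding sum_distrib_left sum_subtractf[symmetric] by (intro sum.cong refl) (simp add: algebra_simps)
  also have "\<dots> = (\<Prod>i<Suc N. 1 - x * Q ^ i)"
    unfolding t_def Suc.IH by (simp add: algebra_simps)
  finally show ?case .
qed simp

section \<open>Bailey's lemma\<close>

text \<open>Bailey's lemma for a = 1 in the limit rho_2 -> infinity, with b = Q/rho_1 and multiplied
  through by (b;Q)_n. In this form it needs no division except by (Q;Q)_k, so it is stated over
  any commutative ring in which these have inverses iQ k.\<close>

definition bailey_weight :: "'a::comm_ring_1 \<Rightarrow> 'a \<Rightarrow> nat \<Rightarrow> 'a" where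
  "bailey_weight Q b j = qsign Q j * (\<Prod>i=1..j. b - Q ^ i)"

definition bailey_tail :: "'a::comm_ring_1 \<Rightarrow> 'a \<Rightarrow> nat \<Rightarrow> nat \<Rightarrow> 'a" where
  "bailey_tail Q b r k = (\<Prod>i<k. 1 - b * Q ^ (r + i))"

lemma bailey_weight_0 [simp]: "bailey_weight Q b 0 = 1"
  by (simp add: bailey_weight_def)

lemma bailey_weight_add:
  "bailey_weight Q b (m + r)
     = bailey_weight Q b r * qsign Q m * (\<Prod>i=1..m. b * Q ^ r - Q ^ (2 * r) * Q ^ i)"
proof -
  have "(\<Prod>i=1..m+r. b - Q ^ i) = (\<Prod>i=1..r. b - Q ^ i) * (\<Prod>i=1+r..m+r. b - Q ^ i)"
    using prod.ub_add_nat[of 1 r "\<lambda>i. b - Q ^ i" m] by (simp add: add.commute)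
  also have "(\<Prod>i=1+r..m+r. b - Q ^ i) = (\<Prod>i=1..m. b - Q ^ (i + r))"
    by (rule prod.shift_bounds_cl_nat_ivl)
  finally have split: "(\<Prod>i=1..m+r. b - Q ^ i) = (\<Prod>i=1..r. b - Q ^ i) * (\<Prod>i=1..m. b - Q ^ (i + r))" .
  have "Q ^ (m * r) = (\<Prod>i=1..m. Q ^ r)"
    by (simp add: power_mult[symmetric] mult.commute)
  then have "Q ^ (m * r) * (\<Prod>i=1..m. b - Q ^ (i + r)) = (\<Prod>i=1..m. Q ^ r * (b - Q ^ (i + r)))"
    by (simp add: prod.distrib)
  also have "\<dots> = (\<Prod>i=1..m. b * Q ^ r - Q ^ (2 * r) * Q ^ i)"
    by (intro prod.cong refl) (simp add: algebra_simps power_add mult_2 mult_2_right)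
  finally have "Q ^ (m * r) * (\<Prod>i=1..m. b - Q ^ (i + r)) = (\<Prod>i=1..m. b * Q ^ r - Q ^ (2 * r) * Q ^ i)" .
  then show ?thesis
    unfolding bailey_weight_def split qsign_add[of Q m r] by (simp only: ac_simps)
qed

lemma sum_triangle_swap:
  "(\<Sum>j\<le>n. \<Sum>r\<le>j. f j r) = (\<Sum>r\<le>(n::nat). \<Sum>j=r..n. f j r)"
proof -
  have "(\<Sum>j\<le>n. \<Sum>r\<le>j. f j r) = (\<Sum>j\<le>n. \<Sum>r\<in>{r. r \<in> {..n} \<and> r \<le> j}. f j r)"
    by (intro sum.cong) auto
  also have "\<dots> = (\<Sum>r\<le>n. \<Sum>j\<in>{j. j \<in> {..n} \<and> r \<le> j}. f j r)"
    by (rule sum.swap_restrict) auto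
  also have "\<dots> = (\<Sum>r\<le>n. \<Sum>j=r..n. f j r)"
    by (intro sum.cong) auto
  finally show ?thesis .
qed

definition bailey_pair ::
    "(nat \<Rightarrow> 'a::comm_ring_1) \<Rightarrow> (nat \<Rightarrow> 'a) \<Rightarrow> (nat \<Rightarrow> 'a) \<Rightarrow> bool" where
  "bailey_pair iQ \<alpha> \<beta> \<longleftrightarrow> (\<forall>n. \<beta> n = (\<Sum>r\<le>n. \<alpha> r * iQ (n - r) * iQ (n + r)))"

locale qfact_inverse =
  fixes Q :: "'a::comm_ring_1" and iQ :: "nat \<Rightarrow> 'a"
  assumes qfact_mult_inverse: "qfact Q k * iQ k = 1"
begin

lemma inverse_split:
  assumes "a \<le> b"
  shows "iQ a = (\<Prod>i=Suc a..b. 1 - Q ^ i) * iQ b"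
proof -
  have "iQ a = iQ a * (qfact Q b * iQ b)"
    by (simp add: qfact_mult_inverse)
  also have "\<dots> = (qfact Q a * iQ a) * (\<Prod>i=Suc a..b. 1 - Q ^ i) * iQ b"
    by (simp add: qfact_split[OF assms] ac_simps)
  finally show ?thesis
    by (simp add: qfact_mult_inverse)
qed

lemma inverse_shift_split:
  assumes "m \<le> N"
  shows "iQ (m + k) = (\<Prod>i=Suc m..N. 1 - Q ^ k * Q ^ i) * iQ (N + k)"
proof -
  have "(\<Prod>i=Suc m + k..N + k. 1 - Q ^ i) = (\<Prod>i=Suc m..N. 1 - Q ^ k * Q ^ i)"
    by (subst prod.shift_bounds_cl_nat_ivl) (simp add: power_add mult.commute)
  then show ?thesis
    using inverse_split[of "m + k" "N + k"] assms by simp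
qed

lemma inverse_mult_inverse:
  assumes "m \<le> N"
  shows "iQ (N - m) * iQ m = qbinomial Q N m * iQ N"
proof -
  have "qbinomial Q N m * iQ N
      = qbinomial Q N m * iQ N * (qfact Q m * iQ m) * (qfact Q (N - m) * iQ (N - m))"
    by (simp add: qfact_mult_inverse)
  also have "\<dots> = (qbinomial Q N m * qfact Q m * qfact Q (N - m)) * iQ N * iQ m * iQ (N - m)"
    by (simp only: ac_simps)
  also have "\<dots> = (qfact Q N * iQ N) * iQ m * iQ (N - m)"
    by (simp only: qbinomial_mult_qfact[OF assms])
  also have "\<dots> = iQ m * iQ (N - m)"
    by (simp only: qfact_mult_inverse mult_1_left)
  finally show ?thesis by (simp only: mult.commute)
qed

lemma qbinomial_symmetric:
  assumes "m \<le> N"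
  shows "qbinomial Q N (N - m) = qbinomial Q N m"
proof -
  have swap: "qbinomial Q N (N - m) * iQ N = qbinomial Q N m * iQ N"
    using inverse_mult_inverse[of m N] inverse_mult_inverse[of "N - m" N] assms
    by (simp add: mult.commute)
  have "qbinomial Q N (N - m) = qbinomial Q N (N - m) * (qfact Q N * iQ N)"
    by (simp add: qfact_mult_inverse)
  also have "\<dots> = (qbinomial Q N (N - m) * iQ N) * qfact Q N"
    by (simp only: ac_simps)
  also have "\<dots> = (qbinomial Q N m * iQ N) * qfact Q N"
    by (simp only: swap)
  also have "\<dots> = qbinomial Q N m * (qfact Q N * iQ N)"
    by (simp only: ac_simps)
  finally show ?thesis
    by (simp add: qfact_mult_inverse)
qed

lemma bailey_sum:
  assumes "r \<le> n"
  shows "(\<Sum>j=r..n. bailey_weight Q b j * iQ (n - j) * iQ (j - r) * iQ (j + r))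
       = bailey_weight Q b r * bailey_tail Q b r (n - r) * iQ (n - r) * iQ (n + r)"
proof -
  define N where "N = n - r"
  have n: "n = N + r" using assms by (simp add: N_def)
  define x where "x = b * Q ^ r"
  define e where "e = Q ^ (2 * r)"
  define C where "C = bailey_weight Q b r * iQ N * iQ (N + 2 * r)"
  have summand: "bailey_weight Q b (m + r) * iQ (n - (m + r)) * iQ (m + r - r) * iQ (m + r + r)
      = C * (qbinomial Q N m * (qsign Q m * (\<Prod>i=1..m. x - e * Q ^ i) * (\<Prod>i=Suc m..N. 1 - e * Q ^ i)))"
    if "m \<le> N" for m
  proof -
    have "n - (m + r) = N - m" "m + r - r = m" "m + r + r = m + 2 * r"
      using n by auto
    then have "bailey_weight Q b (m + r) * iQ (n - (m + r)) * iQ (m + r - r) * iQ (m + r + r)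
        = bailey_weight Q b (m + r) * (iQ (N - m) * iQ m) * iQ (m + 2 * r)"
      by (simp only: mult.assoc)
    also have "\<dots> = bailey_weight Q b r * qsign Q m * (\<Prod>i=1..m. x - e * Q ^ i)
        * (qbinomial Q N m * iQ N) * ((\<Prod>i=Suc m..N. 1 - e * Q ^ i) * iQ (N + 2 * r))"
      unfolding bailey_weight_add inverse_mult_inverse[OF that] inverse_shift_split[OF that] x_def e_def ..
    finally show ?thesis
      unfolding C_def by (simp only: ac_simps)
  qed
  have "(\<Sum>j=r..n. bailey_weight Q b j * iQ (n - j) * iQ (j - r) * iQ (j + r))
      = (\<Sum>m\<le>N. bailey_weight Q b (m + r) * iQ (n - (m + r)) * iQ (m + r - r) * iQ (m + r + r))"
    using sum.shift_bounds_cl_nat_ivl[of _ 0 r N] n by (simp only: atLeast0AtMost add_0)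
  also have "\<dots> = C * (\<Sum>m\<le>N. qbinomial Q N m *
      (qsign Q m * (\<Prod>i=1..m. x - e * Q ^ i) * (\<Prod>i=Suc m..N. 1 - e * Q ^ i)))"
    unfolding sum_distrib_left by (rule sum.cong[OF refl]) (simp only: atMost_iff summand)
  also have "\<dots> = C * bailey_tail Q b r N"
    unfolding qbinomial_theorem_deformed bailey_tail_def x_def by (simp add: power_add mult.assoc)
  finally show ?thesis
    using n by (simp add: C_def mult_2 mult_2_right ac_simps)
qed

theorem bailey_lemma:
  assumes "bailey_pair iQ \<alpha> \<beta>"
  shows "(\<Sum>j\<le>n. bailey_weight Q b j * \<beta> j * iQ (n - j))
       = (\<Sum>r\<le>n. bailey_weight Q b r * \<alpha> r * bailey_tail Q b r (n - r) * iQ (n - r) * iQ (n + r))"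
proof -
  have "(\<Sum>j\<le>n. bailey_weight Q b j * \<beta> j * iQ (n - j))
      = (\<Sum>j\<le>n. \<Sum>r\<le>j. \<alpha> r * (bailey_weight Q b j * iQ (n - j) * iQ (j - r) * iQ (j + r)))"
    using assms unfolding bailey_pair_def
    by (simp add: sum_distrib_left sum_distrib_right ac_simps)
  also have "\<dots> = (\<Sum>r\<le>n. \<Sum>j=r..n. \<alpha> r * (bailey_weight Q b j * iQ (n - j) * iQ (j - r) * iQ (j + r)))"
    by (rule sum_triangle_swap)
  also have "\<dots> = (\<Sum>r\<le>n. \<alpha> r * (bailey_weight Q b r * bailey_tail Q b r (n - r) * iQ (n - r) * iQ (n + r)))"
    by (simp add: bailey_sum flip: sum_distrib_left)
  finally show ?thesis
    by (simp add: ac_simps)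
qed

end

lemma qsign_center_plus:
  assumes "r \<le> n"
  shows "qsign Q (n + r) * (Q ^ n) ^ (n - r) = qsign Q n * Q ^ (n * n) * qsign Q r"
proof -
  have "n * r + n * (n - r) = n * n"
    using assms by (simp flip: add_mult_distrib2)
  then show ?thesis
    by (simp add: qsign_add power_add power_mult[symmetric] ac_simps flip: power_add)
qed

lemma qsign_center_minus:
  assumes "r \<le> n"
  shows "qsign Q (n - r) * (Q ^ n) ^ (n + r) = qsign Q n * Q ^ (n * n) * (qsign Q r * Q ^ r)"
proof -
  define d where "d = n - r"
  have n: "n = r + d" using assms by (simp add: d_def)
  have "r * (r - 1) + r * d + n * n + r = n * (n + r)"
    unfolding n by (cases r) (simp_all add: algebra_simps)
  then have "qsign Q n * Q ^ (n * n) * (qsign Q r * Q ^ r)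
      = qsign Q d * (qsign Q r * qsign Q r) * Q ^ (r * d + n * n + r)"
    by (simp add: n qsign_add power_add ac_simps)
  also have "\<dots> = qsign Q d * Q ^ (n * (n + r))"
    unfolding qsign_square using \<open>r * (r - 1) + r * d + n * n + r = n * (n + r)\<close>
    by (simp add: power_add ac_simps flip: power_add)
  finally show ?thesis
    by (simp add: d_def power_mult)
qed

lemma sum_split_center:
  fixes n :: nat and f :: "nat \<Rightarrow> 'a::comm_monoid_add"
  shows "(\<Sum>m\<le>2 * n. f m) = (\<Sum>r\<le>n. f (n + r)) + (\<Sum>r=1..n. f (n - r))"
proof -
  have "{..2 * n} = {..<n} \<union> {n..n + n}" by auto
  then have "(\<Sum>m\<le>2 * n. f m) = (\<Sum>m<n. f m) + (\<Sum>m=n..n + n. f m)"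
    by (simp add: sum.union_disjoint ivl_disj_int)
  also have "(\<Sum>m=n..n + n. f m) = (\<Sum>r\<le>n. f (n + r))"
    using sum.shift_bounds_cl_nat_ivl[of f 0 n n] by (simp add: atLeast0AtMost add.commute)
  also have "(\<Sum>m<n. f m) = (\<Sum>r=1..n. f (n - r))"
    by (simp add: sum.atLeast1_atMost_eq flip: sum.nat_diff_reindex[of f n])
  finally show ?thesis by (simp add: add.commute)
qed

definition unit_alpha :: "'a::comm_ring_1 \<Rightarrow> nat \<Rightarrow> 'a" where
  "unit_alpha Q r = (if r = 0 then 1 else qsign Q r * (1 + Q ^ r))"

text \<open>Expand the vanishing product of Q^n - Q^i over i < 2n by the q-binomial theorem and pair
  the terms m = n + r and m = n - r.\<close>

lemma sum_unit_alpha_qbinomial: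
  fixes Q :: "'a::idom"
  assumes "qfact_inverse Q iQ" and "Q \<noteq> 0" and "n \<noteq> 0"
  shows "(\<Sum>r\<le>n. unit_alpha Q r * qbinomial Q (2 * n) (n + r)) = 0"
proof -
  interpret qfact_inverse Q iQ by fact
  define K where "K = qsign Q n * Q ^ (n * n)"
  define g where "g m = qbinomial Q (2 * n) m * (qsign Q m * 1 ^ m * (Q ^ n) ^ (2 * n - m))" for m
  have "(\<Sum>m\<le>2 * n. g m) = (\<Prod>i<2 * n. Q ^ n - 1 * Q ^ i)"
    unfolding g_def by (rule qbinomial_theorem)
  also have "\<dots> = 0"
    using \<open>n \<noteq> 0\<close> by (intro prod_zero bexI[of _ n]) auto
  finally have "(\<Sum>m\<le>2 * n. g m) = 0" .
  moreover have "g (n + r) = K * (qsign Q r * qbinomial Q (2 * n) (n + r))" if "r \<le> n" for r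
    using qsign_center_plus[OF that, of Q] that by (simp add: g_def K_def mult_2 ac_simps)
  moreover have "g (n - r) = K * (qsign Q r * Q ^ r * qbinomial Q (2 * n) (n + r))" if "r \<le> n" for r
  proof -
    have "qbinomial Q (2 * n) (n - r) = qbinomial Q (2 * n) (n + r)"
      using qbinomial_symmetric[of "n + r" "2 * n"] that by (simp add: mult_2)
    moreover have "2 * n - (n - r) = n + r" using that by simp
    ultimately show ?thesis
      using qsign_center_minus[OF that, of Q] by (simp add: g_def K_def ac_simps)
  qed
  ultimately have "K * ((\<Sum>r\<le>n. qsign Q r * qbinomial Q (2 * n) (n + r))
                     + (\<Sum>r=1..n. qsign Q r * Q ^ r * qbinomial Q (2 * n) (n + r))) = 0"
    unfolding sum_split_center[of g n] distrib_left sum_distrib_left by simp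
  moreover have "K \<noteq> 0"
    using \<open>Q \<noteq> 0\<close> by (simp add: K_def qsign_def)
  moreover have "(\<Sum>r\<le>n. unit_alpha Q r * qbinomial Q (2 * n) (n + r))
      = (\<Sum>r\<le>n. qsign Q r * qbinomial Q (2 * n) (n + r))
        + (\<Sum>r=1..n. qsign Q r * Q ^ r * qbinomial Q (2 * n) (n + r))"
    by (simp add: atMost_atLeast0 sum.atLeast_Suc_atMost unit_alpha_def sum.distrib algebra_simps)
  ultimately show ?thesis
    by simp
qed

lemma unit_bailey_pair:
  fixes Q :: "'a::idom"
  assumes "qfact_inverse Q iQ" and "Q \<noteq> 0"
  shows "bailey_pair iQ (unit_alpha Q) (\<lambda>n. if n = 0 then 1 else 0)"
  unfolding bailey_pair_def
proof
  interpret qfact_inverse Q iQ by fact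
  fix n
  show "(if n = 0 then 1 else 0) = (\<Sum>r\<le>n. unit_alpha Q r * iQ (n - r) * iQ (n + r))"
  proof (cases "n = 0")
    case True
    then show ?thesis
      using qfact_mult_inverse[of 0] by (simp add: unit_alpha_def)
  next
    case False
    have "(\<Sum>r\<le>n. unit_alpha Q r * iQ (n - r) * iQ (n + r))
        = (\<Sum>r\<le>n. unit_alpha Q r * qbinomial Q (2 * n) (n + r)) * iQ (2 * n)"
      unfolding sum_distrib_right
    proof (rule sum.cong[OF refl])
      fix r assume "r \<in> {..n}"
      then have "iQ (n - r) * iQ (n + r) = qbinomial Q (2 * n) (n + r) * iQ (2 * n)"
        using inverse_mult_inverse[of "n + r" "2 * n"] by (simp add: mult_2)
      then show "unit_alpha Q r * iQ (n - r) * iQ (n + r)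
          = unit_alpha Q r * qbinomial Q (2 * n) (n + r) * iQ (2 * n)"
        by (simp add: mult.assoc)
    qed
    then show ?thesis
      using sum_unit_alpha_qbinomial[OF assms False] False by simp
  qed
qed

section \<open>Truncation of power series\<close>

lemma fps_X_power_dvd_iff:
  "fps_X ^ m dvd (f :: 'a::comm_ring_1 fps) \<longleftrightarrow> (\<forall>i<m. f $ i = 0)"
proof
  assume "fps_X ^ m dvd f"
  then obtain g where "f = fps_X ^ m * g" by (elim dvdE)
  then show "\<forall>i<m. f $ i = 0" by (simp add: fps_X_power_mult_nth)
next
  assume "\<forall>i<m. f $ i = 0"
  then have "f = fps_X ^ m * fps_shift m f"
    by (intro fps_ext) (simp add: fps_X_power_mult_nth)
  then show "fps_X ^ m dvd f" by (rule dvdI)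
qed

lemma dvd_mult_diff_one:
  fixes a b d :: "'a::comm_ring_1"
  assumes "d dvd a - 1" and "d dvd b - 1"
  shows "d dvd a * b - 1"
proof -
  have "d dvd (a - 1) * b + (b - 1)"
    using assms by (intro dvd_add dvd_mult2)
  moreover have "(a - 1) * b + (b - 1) = a * b - 1"
    by (simp add: algebra_simps)
  ultimately show ?thesis by simp
qed

lemma dvd_prod_diff_one:
  fixes f :: "'b \<Rightarrow> 'a::comm_ring_1"
  assumes "\<And>i. i \<in> S \<Longrightarrow> d dvd f i - 1"
  shows "d dvd prod f S - 1"
  using assms
proof (induction S rule: infinite_finite_induct)
  case (insert x S)
  then show ?case by (simp add: dvd_mult_diff_one)
qed simp_all

lemma coeff_sum_truncation:
  fixes w g :: "nat \<Rightarrow> 'a::comm_ring_1 fps"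
  assumes w: "\<And>r. fps_X ^ r dvd w r"
    and g: "\<And>r. r \<le> n \<Longrightarrow> fps_X ^ (Suc n - r) dvd g r - 1"
    and "k \<le> n"
  shows "(\<Sum>r\<le>n. w r * g r) $ k = (\<Sum>r\<le>k. w r $ k)"
proof -
  have "fps_X ^ Suc n dvd w r * (g r - 1)" if "r \<le> n" for r
  proof -
    have "fps_X ^ (r + (Suc n - r)) dvd w r * (g r - 1)"
      using mult_dvd_mono[OF w g[OF that]] by (simp add: power_add)
    then show ?thesis using that by simp
  qed
  then have "fps_X ^ Suc n dvd (\<Sum>r\<le>n. w r * (g r - 1))"
    by (blast intro: dvd_sum)
  then have "(\<Sum>r\<le>n. w r * (g r - 1)) $ k = 0"
    using \<open>k \<le> n\<close> unfolding fps_X_power_dvd_iff by simp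
  moreover have "(\<Sum>r\<le>n. w r * g r) = (\<Sum>r\<le>n. w r) + (\<Sum>r\<le>n. w r * (g r - 1))"
    by (simp add: sum.distrib[symmetric] algebra_simps)
  ultimately have "(\<Sum>r\<le>n. w r * g r) $ k = (\<Sum>r\<le>n. w r $ k)"
    by (simp add: fps_sum_nth)
  also have "\<dots> = (\<Sum>r\<le>k. w r $ k)"
  proof (rule sum.mono_neutral_right)
    show "\<forall>r\<in>{..n} - {..k}. w r $ k = 0"
      using w by (auto simp: fps_X_power_dvd_iff)
  qed (use \<open>k \<le> n\<close> in auto)
  finally show ?thesis .
qed

lemma one_minus_fps_X_power_mult_inv:
  "0 < j \<Longrightarrow> (1 - fps_X ^ j) * inv_one_minus_Xpow j = 1"
proof (rule fps_ext)
  fix m assume "0 < j"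
  show "((1 - fps_X ^ j) * inv_one_minus_Xpow j) $ m = (1 :: int fps) $ m"
  proof (cases "m < j")
    case True
    then have "j dvd m \<longleftrightarrow> m = 0" using \<open>0 < j\<close> by (auto dest: dvd_imp_le)
    then show ?thesis
      using True by (simp add: algebra_simps fps_X_power_mult_nth inv_one_minus_Xpow_def)
  next
    case False
    then have "j dvd m \<longleftrightarrow> j dvd (m - j)" by (simp add: dvd_minus_self)
    then show ?thesis
      using False \<open>0 < j\<close> by (simp add: algebra_simps fps_X_power_mult_nth inv_one_minus_Xpow_def)
  qed
qed

lemma fps_X_power_dvd_inv_one_minus_Xpow: "0 < j \<Longrightarrow> fps_X ^ j dvd inv_one_minus_Xpow j - 1"
  by (auto simp: fps_X_power_dvd_iff inv_one_minus_Xpow_def dest: dvd_imp_le)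

section \<open>Two Bailey pairs in base q^2\<close>

definition inv_qfact_even :: "nat \<Rightarrow> int fps" where
  "inv_qfact_even k = (\<Prod>i=1..k. inv_one_minus_Xpow (2 * i))"

definition inv_qfact_odd :: "nat \<Rightarrow> int fps" where
  "inv_qfact_odd k = (\<Prod>i=1..k. inv_one_minus_Xpow (2 * i - 1))"

interpretation q2: qfact_inverse "fps_X ^ 2 :: int fps" inv_qfact_even
proof
  fix k
  have "qfact (fps_X ^ 2) k * inv_qfact_even k
      = (\<Prod>i=1..k. (1 - fps_X ^ (2 * i)) * inv_one_minus_Xpow (2 * i))"
    by (simp add: qfact_def inv_qfact_even_def prod.distrib power_mult)
  also have "\<dots> = 1"
    by (intro prod.neutral ballI one_minus_fps_X_power_mult_inv) auto
  finally show "qfact (fps_X ^ 2) k * inv_qfact_even k = 1" .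
qed

lemma inv_qpoch_q_double: "inv_qpoch_q (2 * j) = inv_qfact_even j * inv_qfact_odd j"
proof (induction j)
  case (Suc j)
  have "inv_qpoch_q (2 * Suc j)
      = inv_qpoch_q (2 * j) * inv_one_minus_Xpow (Suc (2 * j)) * inv_one_minus_Xpow (Suc (Suc (2 * j)))"
    by (simp add: inv_qpoch_q_def)
  then show ?case
    using Suc by (simp add: inv_qfact_even_def inv_qfact_odd_def algebra_simps)
qed (simp add: inv_qpoch_q_def inv_qfact_even_def inv_qfact_odd_def)

lemma qfact_q2_mult_inv_qfact_even_cong_one:
  "fps_X ^ Suc (min n k) dvd qfact (fps_X ^ 2) n * inv_qfact_even k - 1"
proof (cases "k \<le> n")
  case True
  have "qfact (fps_X ^ 2) n * inv_qfact_even k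
      = (\<Prod>i=Suc k..n. 1 - (fps_X ^ 2) ^ i) * (qfact (fps_X ^ 2) n * inv_qfact_even n)"
    by (simp add: q2.inverse_split[OF True] ac_simps)
  also have "\<dots> = (\<Prod>i=Suc k..n. 1 - fps_X ^ (2 * i))"
    by (simp add: q2.qfact_mult_inverse power_mult)
  also have "fps_X ^ Suc k dvd \<dots> - 1"
  proof (rule dvd_prod_diff_one)
    fix i assume "i \<in> {Suc k..n}"
    then have "fps_X ^ Suc k dvd (fps_X ^ (2 * i) :: int fps)" by (intro le_imp_power_dvd) auto
    then show "fps_X ^ Suc k dvd (1 - fps_X ^ (2 * i) :: int fps) - 1" by simp
  qed
  finally show ?thesis using True by simp
next
  case False
  have "inv_qfact_even k = inv_qfact_even n * (\<Prod>i=Suc n..k. inv_one_minus_Xpow (2 * i))"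
    unfolding inv_qfact_even_def using prod.ub_add_nat[of 1 n _ "k - n"] False by simp
  then have "qfact (fps_X ^ 2) n * inv_qfact_even k = (\<Prod>i=Suc n..k. inv_one_minus_Xpow (2 * i))"
    using q2.qfact_mult_inverse[of n] by (simp add: mult.assoc[symmetric])
  also have "fps_X ^ Suc n dvd \<dots> - 1"
  proof (rule dvd_prod_diff_one)
    fix i assume "i \<in> {Suc n..k}"
    then have "fps_X ^ Suc n dvd (fps_X ^ (2 * i) :: int fps)" by (intro le_imp_power_dvd) auto
    then show "fps_X ^ Suc n dvd inv_one_minus_Xpow (2 * i) - 1"
      using fps_X_power_dvd_inv_one_minus_Xpow[of "2 * i"] \<open>i \<in> {Suc n..k}\<close>
      by (auto intro: dvd_trans)
  qed
  finally show ?thesis using False by simp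
qed

definition quad_alpha :: "int \<Rightarrow> nat \<Rightarrow> nat \<Rightarrow> int fps" where
  "quad_alpha c a r = (if r = 0 then 1
     else fps_const (c ^ r) * fps_X ^ (a * r * r - r) * (1 + fps_X ^ (2 * r)))"

definition theta_term :: "int \<Rightarrow> nat \<Rightarrow> nat \<Rightarrow> int fps" where
  "theta_term c a r = (if r = 0 then 1 else 2 * fps_const (c ^ r) * fps_X ^ (a * r * r))"

lemma fps_const_neg_one_power: "fps_const ((-1) ^ r) = ((-1) ^ r :: int fps)"
  by (metis fps_const_1_eq_1 fps_const_neg fps_const_power)

lemma unit_alpha_q2: "unit_alpha (fps_X ^ 2) = quad_alpha (-1) 1"
proof
  fix r
  have "2 * (r choose 2) = r * r - r"
    by (simp add: two_times_choose_two algebra_simps)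
  then show "unit_alpha (fps_X ^ 2) r = quad_alpha (-1) 1 r"
    by (simp add: unit_alpha_def quad_alpha_def qsign_def fps_const_neg_one_power
        power_mult[symmetric] ac_simps)
qed

lemma unit_bailey_pair_q2:
  "bailey_pair inv_qfact_even (quad_alpha (-1) 1) (\<lambda>n. if n = 0 then 1 else 0)"
  unfolding unit_alpha_q2[symmetric]
  by (rule unit_bailey_pair) (unfold_locales, simp)

lemma bailey_weight_q_mult_inv_qfact_odd:
  "bailey_weight (fps_X ^ 2) fps_X r * inv_qfact_odd r = (-1) ^ r * fps_X ^ (r * r)"
proof -
  have "(\<Prod>i=1..r. fps_X - (fps_X ^ 2) ^ i) = fps_X ^ r * (\<Prod>i=1..r. 1 - fps_X ^ (2 * i - 1) :: int fps)"
  proof -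
    have "fps_X - (fps_X ^ 2) ^ i = fps_X * (1 - fps_X ^ (2 * i - 1) :: int fps)" if "i \<in> {1..r}" for i
    proof -
      have "(fps_X ^ 2) ^ i = fps_X * (fps_X ^ (2 * i - 1) :: int fps)"
        using that by (simp add: power_mult[symmetric] flip: power_Suc)
      then show ?thesis by (simp add: algebra_simps)
    qed
    then show ?thesis by (simp add: prod.distrib)
  qed
  moreover have "(\<Prod>i=1..r. 1 - fps_X ^ (2 * i - 1)) * inv_qfact_odd r = 1"
    unfolding inv_qfact_odd_def prod.distrib[symmetric]
    by (intro prod.neutral ballI one_minus_fps_X_power_mult_inv) auto
  ultimately have "bailey_weight (fps_X ^ 2) fps_X r * inv_qfact_odd r = qsign (fps_X ^ 2) r * fps_X ^ r"
    by (simp add: bailey_weight_def mult.assoc)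
  moreover have "2 * (r choose 2) + r = r * r"
    by (simp add: two_times_choose_two) (cases r; simp)
  ultimately show ?thesis
    by (simp add: qsign_def mult.assoc flip: power_mult power_add)
qed

lemma bailey_tail_q_mult_inv_qfact_odd:
  assumes "r \<le> n"
  shows "bailey_tail (fps_X ^ 2) fps_X r (n - r) * inv_qfact_odd n = inv_qfact_odd r"
proof -
  have "inv_qfact_odd n = inv_qfact_odd r * (\<Prod>i=Suc r..n. inv_one_minus_Xpow (2 * i - 1))"
    unfolding inv_qfact_odd_def using prod.ub_add_nat[of 1 r _ "n - r"] assms by simp
  also have "(\<Prod>i=Suc r..n. inv_one_minus_Xpow (2 * i - 1)) = (\<Prod>i<n - r. inv_one_minus_Xpow (2 * (r + i) + 1))"
    using prod.shift_bounds_nat_ivl[of "\<lambda>i. inv_one_minus_Xpow (2 * i - 1)" 0 "Suc r" "n - r"] assms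
    by (simp add: atLeastLessThanSuc_atLeastAtMost atLeast0LessThan algebra_simps)
  finally have split: "inv_qfact_odd n = inv_qfact_odd r * (\<Prod>i<n - r. inv_one_minus_Xpow (2 * (r + i) + 1))" .
  have tail: "bailey_tail (fps_X ^ 2) fps_X r (n - r) = (\<Prod>i<n - r. 1 - fps_X ^ (2 * (r + i) + 1))"
    unfolding bailey_tail_def by (intro prod.cong refl) (simp add: power_mult[symmetric] algebra_simps)
  have cancel: "bailey_tail (fps_X ^ 2) fps_X r (n - r)
      * (\<Prod>i<n - r. inv_one_minus_Xpow (2 * (r + i) + 1)) = 1"
    unfolding tail prod.distrib[symmetric] by (intro prod.neutral ballI one_minus_fps_X_power_mult_inv) simp
  have "bailey_tail (fps_X ^ 2) fps_X r (n - r) * inv_qfact_odd n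
      = inv_qfact_odd r * (bailey_tail (fps_X ^ 2) fps_X r (n - r)
          * (\<Prod>i<n - r. inv_one_minus_Xpow (2 * (r + i) + 1)))"
    unfolding split by (simp only: ac_simps)
  then show ?thesis
    by (simp only: cancel mult_1_right)
qed

lemma bailey_summand_q:
  assumes "r \<le> n"
  shows "bailey_weight (fps_X ^ 2) fps_X r * quad_alpha (-1) 1 r * bailey_tail (fps_X ^ 2) fps_X r (n - r)
           * inv_qfact_odd n = quad_alpha 1 2 r"
proof -
  have "bailey_weight (fps_X ^ 2) fps_X r * quad_alpha (-1) 1 r * bailey_tail (fps_X ^ 2) fps_X r (n - r)
        * inv_qfact_odd n = (bailey_weight (fps_X ^ 2) fps_X r * inv_qfact_odd r) * quad_alpha (-1) 1 r"
    by (simp only: mult.assoc bailey_tail_q_mult_inv_qfact_odd[OF assms]) (simp only: ac_simps)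
  also have "\<dots> = ((-1) ^ r * fps_X ^ (r * r)) * quad_alpha (-1) 1 r"
    by (simp only: bailey_weight_q_mult_inv_qfact_odd)
  also have "\<dots> = quad_alpha 1 2 r"
  proof (cases "r = 0")
    case False
    have "r * r + (r * r - r) = 2 * r * r - r" by (simp add: algebra_simps)
    then show ?thesis
      using False
      by (simp add: quad_alpha_def fps_const_neg_one_power ac_simps flip: power_add power_mult_distrib)
  qed (simp add: quad_alpha_def)
  finally show ?thesis .
qed

lemma bailey_pair_inv_qpoch_q:
  "bailey_pair inv_qfact_even (quad_alpha 1 2) (\<lambda>n. inv_qpoch_q (2 * n))"
  unfolding bailey_pair_def
proof
  fix n
  have "(\<Sum>j\<le>n. bailey_weight (fps_X ^ 2) fps_X j * (if j = 0 then 1 else 0) * inv_qfact_even (n - j))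
      = inv_qfact_even n"
    by (simp add: sum.atMost_shift)
  then have "inv_qfact_even n = (\<Sum>r\<le>n. bailey_weight (fps_X ^ 2) fps_X r * quad_alpha (-1) 1 r
      * bailey_tail (fps_X ^ 2) fps_X r (n - r) * inv_qfact_even (n - r) * inv_qfact_even (n + r))"
    using q2.bailey_lemma[OF unit_bailey_pair_q2, where n = n and b = fps_X] by simp
  then have "inv_qpoch_q (2 * n) = (\<Sum>r\<le>n. bailey_weight (fps_X ^ 2) fps_X r * quad_alpha (-1) 1 r
      * bailey_tail (fps_X ^ 2) fps_X r (n - r) * inv_qfact_even (n - r) * inv_qfact_even (n + r))
      * inv_qfact_odd n"
    by (simp only: inv_qpoch_q_double)
  also have "\<dots> = (\<Sum>r\<le>n. (bailey_weight (fps_X ^ 2) fps_X r * quad_alpha (-1) 1 r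
      * bailey_tail (fps_X ^ 2) fps_X r (n - r) * inv_qfact_odd n) * inv_qfact_even (n - r) * inv_qfact_even (n + r))"
    unfolding sum_distrib_right by (simp only: ac_simps)
  also have "\<dots> = (\<Sum>r\<le>n. quad_alpha 1 2 r * inv_qfact_even (n - r) * inv_qfact_even (n + r))"
    by (rule sum.cong[OF refl]) (simp only: atMost_iff bailey_summand_q)
  finally show "inv_qpoch_q (2 * n) = (\<Sum>r\<le>n. quad_alpha 1 2 r * inv_qfact_even (n - r) * inv_qfact_even (n + r))" .
qed

lemma bailey_weight_neg:
  "bailey_weight Q (-Q) r = Q ^ (r + (r choose 2)) * (\<Prod>i<r. 1 + Q ^ i)"
proof (induction r)
  case (Suc r)
  have "bailey_weight Q (-Q) (Suc r) = bailey_weight Q (-Q) r * (Q ^ Suc r * (1 + Q ^ r))"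
    by (simp add: bailey_weight_def qsign_Suc algebra_simps)
  then show ?case
    unfolding Suc by (simp add: choose_two_Suc power_add algebra_simps)
qed (simp add: binomial_eq_0)

lemma bailey_tail_neg: "bailey_tail Q (-Q) r k = (\<Prod>i<k. 1 + Q ^ (Suc r + i))"
  by (simp add: bailey_tail_def algebra_simps)

lemma prod_one_plus_power_split:
  "(\<Prod>i<a. 1 + Q ^ i) * (\<Prod>i<k. 1 + Q ^ (a + i)) = (\<Prod>i<a + k. 1 + (Q :: 'a::comm_ring_1) ^ i)"
  by (induction k) (auto simp: algebra_simps)

lemma prod_one_plus_power_Suc:
  "(\<Prod>i<Suc n. 1 + (Q :: 'a::comm_ring_1) ^ i) = 2 * (\<Prod>i<n. 1 + Q ^ Suc i)"
  by (simp add: prod.lessThan_Suc_shift del: prod.lessThan_Suc)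

lemma qpoch_neg_q2: "qpoch (-(fps_X ^ 2)) (fps_X ^ 2) n = (\<Prod>i<n. 1 + (fps_X ^ 2) ^ Suc i)"
  by (simp add: qpoch_def)

lemma s_term_eq: "s_term j = bailey_weight (fps_X ^ 2) (-(fps_X ^ 2)) j * inv_qpoch_q (2 * j)"
proof -
  have "2 * (j + (j choose 2)) = j * (j + 1)"
    by (simp add: two_times_choose_two algebra_simps)
  then show ?thesis
    by (simp add: s_term_def bailey_weight_neg qpoch_def power_mult[symmetric] ac_simps)
qed

text \<open>The factor 1 + q^(2r) of alpha_r completes (-1;q^2)_r (-q^(2r+2);q^2)_(n-r) to
  2 (-q^2;q^2)_n.\<close>

lemma bailey_summand_neg_q2:
  assumes "0 < a" and "r \<le> n"
  shows "bailey_weight (fps_X ^ 2) (-(fps_X ^ 2)) r * quad_alpha c a r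
           * bailey_tail (fps_X ^ 2) (-(fps_X ^ 2)) r (n - r)
       = qpoch (-(fps_X ^ 2)) (fps_X ^ 2) n * theta_term c (Suc a) r"
proof -
  have prods: "(\<Prod>i<r. 1 + (fps_X ^ 2) ^ i) * (1 + (fps_X ^ 2) ^ r)
      * bailey_tail (fps_X ^ 2) (-(fps_X ^ 2)) r (n - r) = 2 * qpoch (-(fps_X ^ 2)) (fps_X ^ 2) n"
  proof -
    have "(\<Prod>i<r. 1 + (fps_X ^ 2) ^ i) * (1 + (fps_X ^ 2) ^ r)
          * bailey_tail (fps_X ^ 2) (-(fps_X ^ 2)) r (n - r)
        = (\<Prod>i<Suc r. 1 + (fps_X ^ 2) ^ i) * (\<Prod>i<n - r. 1 + (fps_X ^ 2) ^ (Suc r + i))"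
      by (simp add: bailey_tail_neg)
    also have "\<dots> = (\<Prod>i<Suc n. 1 + (fps_X ^ 2) ^ i)"
      using assms(2) by (simp only: prod_one_plus_power_split) simp
    finally show ?thesis
      by (simp only: prod_one_plus_power_Suc qpoch_neg_q2)
  qed
  show ?thesis
  proof (cases "r = 0")
    case True
    then show ?thesis
      using prods by (simp add: quad_alpha_def theta_term_def)
  next
    case False
    have "r \<le> a * r * r" using assms False by simp
    then have "2 * (r + (r choose 2)) + (a * r * r - r) = Suc a * r * r"
      by (simp add: two_times_choose_two algebra_simps) (cases r; simp)
    then have "(fps_X ^ 2) ^ (r + (r choose 2)) * fps_X ^ (a * r * r - r) = (fps_X ^ (Suc a * r * r) :: int fps)"
      by (simp flip: power_mult power_add)
    then show ?thesis
      using False prods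
      by (simp add: bailey_weight_neg quad_alpha_def theta_term_def power_mult[symmetric] ac_simps)
  qed
qed

lemma bailey_lemma_neg_q2:
  assumes "bailey_pair inv_qfact_even (quad_alpha c a) \<beta>" and "0 < a"
  shows "(\<Sum>j\<le>n. bailey_weight (fps_X ^ 2) (-(fps_X ^ 2)) j * \<beta> j * inv_qfact_even (n - j))
       = qpoch (-(fps_X ^ 2)) (fps_X ^ 2) n
         * (\<Sum>r\<le>n. theta_term c (Suc a) r * inv_qfact_even (n - r) * inv_qfact_even (n + r))"
proof -
  have "(\<Sum>j\<le>n. bailey_weight (fps_X ^ 2) (-(fps_X ^ 2)) j * \<beta> j * inv_qfact_even (n - j))
      = (\<Sum>r\<le>n. bailey_weight (fps_X ^ 2) (-(fps_X ^ 2)) r * quad_alpha c a r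
          * bailey_tail (fps_X ^ 2) (-(fps_X ^ 2)) r (n - r) * inv_qfact_even (n - r) * inv_qfact_even (n + r))"
    by (rule q2.bailey_lemma[OF assms(1)])
  also have "\<dots> = (\<Sum>r\<le>n. qpoch (-(fps_X ^ 2)) (fps_X ^ 2) n
          * (theta_term c (Suc a) r * inv_qfact_even (n - r) * inv_qfact_even (n + r)))"
  proof (rule sum.cong[OF refl])
    fix r assume "r \<in> {..n}"
    then show "bailey_weight (fps_X ^ 2) (-(fps_X ^ 2)) r * quad_alpha c a r
          * bailey_tail (fps_X ^ 2) (-(fps_X ^ 2)) r (n - r) * inv_qfact_even (n - r) * inv_qfact_even (n + r)
        = qpoch (-(fps_X ^ 2)) (fps_X ^ 2) n
          * (theta_term c (Suc a) r * inv_qfact_even (n - r) * inv_qfact_even (n + r))"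
      using bailey_summand_neg_q2[OF assms(2), of r n c] by (simp only: atMost_iff mult.assoc)
  qed
  finally show ?thesis
    by (simp only: sum_distrib_left)
qed

lemma sum_s_term_inv_qfact_even:
  "(\<Sum>j\<le>n. s_term j * inv_qfact_even (n - j))
     = qpoch (-(fps_X ^ 2)) (fps_X ^ 2) n
       * (\<Sum>r\<le>n. theta_term 1 3 r * inv_qfact_even (n - r) * inv_qfact_even (n + r))"
  using bailey_lemma_neg_q2[OF bailey_pair_inv_qpoch_q, of n] by (simp add: s_term_eq numeral_3_eq_3)

lemma inv_qfact_even_eq:
  "inv_qfact_even n
     = qpoch (-(fps_X ^ 2)) (fps_X ^ 2) n
       * (\<Sum>r\<le>n. theta_term (-1) 2 r * inv_qfact_even (n - r) * inv_qfact_even (n + r))"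
proof -
  have "(\<Sum>j\<le>n. bailey_weight (fps_X ^ 2) (-(fps_X ^ 2)) j * (if j = 0 then 1 else 0)
      * inv_qfact_even (n - j)) = inv_qfact_even n"
    by (simp add: sum.atMost_shift)
  then show ?thesis
    using bailey_lemma_neg_q2[OF unit_bailey_pair_q2, of n] by (simp add: numeral_2_eq_2)
qed

section \<open>The generating function of s\<close>

text \<open>theta c a = 1 + 2 sum_{r>=1} c^r q^(a r^2); only r <= k contributes to the coefficient
  of q^k.\<close>

definition theta :: "int \<Rightarrow> nat \<Rightarrow> int fps" where
  "theta c a = Abs_fps (\<lambda>k. \<Sum>r\<le>k. theta_term c a r $ k)"

definition qfact_ratio :: "nat \<Rightarrow> nat \<Rightarrow> int fps" where
  "qfact_ratio n k = qfact (fps_X ^ 2) n * inv_qfact_even k"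

lemma fps_X_power_dvd_theta_term:
  assumes "0 < a"
  shows "fps_X ^ r dvd theta_term c a r"
proof -
  have "r \<le> a * r * r" using assms by simp
  then have "fps_X ^ r dvd (fps_X ^ (a * r * r) :: int fps)" by (rule le_imp_power_dvd)
  then show ?thesis by (simp add: theta_term_def)
qed

lemma fps_X_power_dvd_s_term: "fps_X ^ j dvd s_term j"
  unfolding s_term_def by (intro dvd_mult dvd_mult2 le_imp_power_dvd) simp

lemma qfact_ratio_cong_one:
  assumes "r \<le> n"
  shows "fps_X ^ (Suc n - r) dvd qfact_ratio n (n - r) - 1"
    and "fps_X ^ (Suc n - r) dvd qfact_ratio n (n + r) - 1"
proof -
  show "fps_X ^ (Suc n - r) dvd qfact_ratio n (n - r) - 1"
    using qfact_q2_mult_inv_qfact_even_cong_one[of n "n - r"] assms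
    by (simp add: qfact_ratio_def Suc_diff_le)
  have "fps_X ^ (Suc n - r) dvd (fps_X ^ Suc n :: int fps)"
    by (intro le_imp_power_dvd) simp
  then show "fps_X ^ (Suc n - r) dvd qfact_ratio n (n + r) - 1"
    using qfact_q2_mult_inv_qfact_even_cong_one[of n "n + r"]
    by (auto simp: qfact_ratio_def intro: dvd_trans)
qed

lemma coeff_truncated_s:
  "k \<le> n \<Longrightarrow> (\<Sum>j\<le>n. s_term j * qfact_ratio n (n - j)) $ k = s k"
  unfolding s_def
  by (rule coeff_sum_truncation[OF fps_X_power_dvd_s_term qfact_ratio_cong_one(1)])

lemma coeff_truncated_theta:
  assumes "0 < a" and "k \<le> n"
  shows "(\<Sum>r\<le>n. theta_term c a r * (qfact_ratio n (n - r) * qfact_ratio n (n + r))) $ k = theta c a $ k"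
  unfolding theta_def fps_nth_Abs_fps
  using fps_X_power_dvd_theta_term[OF assms(1)] dvd_mult_diff_one[OF qfact_ratio_cong_one] assms(2)
  by (rule coeff_sum_truncation)

text \<open>Both finite Bailey identities are multiplied by (q^2;q^2)_n^2; the remaining factor
  (q^2;q^2)_n is a unit and cancels.\<close>

lemma truncated_s_mult_theta:
  "(\<Sum>j\<le>n. s_term j * qfact_ratio n (n - j))
     * (\<Sum>r\<le>n. theta_term (-1) 2 r * (qfact_ratio n (n - r) * qfact_ratio n (n + r)))
   = (\<Sum>r\<le>n. theta_term 1 3 r * (qfact_ratio n (n - r) * qfact_ratio n (n + r)))"
  (is "?A * ?B = ?C")
proof -
  define P where "P = qfact (fps_X ^ 2 :: int fps) n"
  have P_inv: "P * inv_qfact_even n = 1"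
    unfolding P_def by (rule q2.qfact_mult_inverse)
  have "P * ?A = P * P * (\<Sum>j\<le>n. s_term j * inv_qfact_even (n - j))"
    by (simp add: qfact_ratio_def P_def sum_distrib_left ac_simps)
  also have "\<dots> = qpoch (-(fps_X ^ 2)) (fps_X ^ 2) n * ?C"
    by (simp add: sum_s_term_inv_qfact_even qfact_ratio_def P_def sum_distrib_left ac_simps)
  finally have A: "P * ?A = qpoch (-(fps_X ^ 2)) (fps_X ^ 2) n * ?C" .
  have "P = P * P * inv_qfact_even n"
    using P_inv by (simp add: ac_simps)
  also have "\<dots> = qpoch (-(fps_X ^ 2)) (fps_X ^ 2) n * ?B"
    by (subst inv_qfact_even_eq) (simp add: qfact_ratio_def P_def sum_distrib_left ac_simps)
  finally have B: "P = qpoch (-(fps_X ^ 2)) (fps_X ^ 2) n * ?B" .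
  have "P * (?A * ?B) = (P * ?A) * ?B"
    by (simp only: mult.assoc)
  also have "\<dots> = ?C * (qpoch (-(fps_X ^ 2)) (fps_X ^ 2) n * ?B)"
    unfolding A by (simp only: ac_simps)
  also have "\<dots> = P * ?C"
    unfolding B[symmetric] by (simp only: mult.commute)
  finally have "P * (?A * ?B) = P * ?C" .
  then have "inv_qfact_even n * P * (?A * ?B) = inv_qfact_even n * P * ?C"
    by (simp only: mult.assoc)
  then show ?thesis
    using P_inv by (simp add: mult.commute)
qed

theorem s_mult_theta: "Abs_fps s * theta (-1) 2 = theta 1 3"
proof (rule fps_ext)
  fix n
  let ?A = "\<Sum>j\<le>n. s_term j * qfact_ratio n (n - j)"
  let ?B = "\<lambda>c a. \<Sum>r\<le>n. theta_term c a r * (qfact_ratio n (n - r) * qfact_ratio n (n + r))"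
  have "(Abs_fps s * theta (-1) 2) $ n = (\<Sum>i=0..n. ?A $ i * ?B (-1) 2 $ (n - i))"
    unfolding fps_mult_nth
    by (intro sum.cong refl) (simp add: coeff_truncated_s coeff_truncated_theta)
  also have "\<dots> = (?A * ?B (-1) 2) $ n"
    by (simp add: fps_mult_nth)
  also have "\<dots> = theta 1 3 $ n"
    by (simp add: truncated_s_mult_theta coeff_truncated_theta)
  finally show "(Abs_fps s * theta (-1) 2) $ n = theta 1 3 $ n" .
qed

section \<open>Congruences\<close>

definition pos_theta :: "int \<Rightarrow> nat \<Rightarrow> int fps" where
  "pos_theta c a = Abs_fps (\<lambda>k. \<Sum>r=1..k. if k = a * r * r then c ^ r else 0)"

lemma theta_term_nth:
  "theta_term c a r $ k
     = (if r = 0 then (if k = 0 then 1 else 0) else if k = a * r * r then 2 * c ^ r else 0)"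
  by (simp add: theta_term_def fps_X_power_nth numeral_fps_const)

lemma theta_eq: "theta c a = 1 + 2 * pos_theta c a"
proof (rule fps_ext)
  fix k
  have "theta c a $ k = theta_term c a 0 $ k + (\<Sum>r=1..k. theta_term c a r $ k)"
    unfolding theta_def fps_nth_Abs_fps by (simp add: sum.atMost_shift sum.atLeast1_atMost_eq)
  also have "\<dots> = (1 + 2 * pos_theta c a) $ k"
    by (simp add: theta_term_nth pos_theta_def numeral_fps_const sum_distrib_left if_distrib cong: if_cong)
  finally show "theta c a $ k = (1 + 2 * pos_theta c a) $ k" .
qed

lemma fps_mult_nth_nonzero:
  assumes "(f * g) $ k \<noteq> (0 :: 'a::comm_ring_1)"
  obtains i where "i \<le> k" and "f $ i \<noteq> 0" and "g $ (k - i) \<noteq> 0"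
  using assms by (force simp: fps_mult_nth intro: sum.neutral)

lemma pos_theta_nth_nonzero: "pos_theta c a $ k \<noteq> 0 \<Longrightarrow> \<exists>r. k = a * r * r"
  by (auto simp: pos_theta_def intro: ccontr sum.neutral)

lemma pos_theta_power_nth_odd: "odd k \<Longrightarrow> (pos_theta c 2 ^ j) $ k = 0"
proof (induction j arbitrary: k)
  case 0
  then show ?case by (cases k) auto
next
  case (Suc j)
  show ?case
  proof (rule ccontr)
    assume "(pos_theta c 2 ^ Suc j) $ k \<noteq> 0"
    then obtain i where "i \<le> k" "pos_theta c 2 $ i \<noteq> 0" "(pos_theta c 2 ^ j) $ (k - i) \<noteq> 0"
      by (auto elim: fps_mult_nth_nonzero)
    moreover from \<open>pos_theta c 2 $ i \<noteq> 0\<close> have "even i"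
      by (auto dest: pos_theta_nth_nonzero)
    ultimately show False
      using Suc by auto
  qed
qed

lemma convolution_square_split:
  fixes f :: "nat \<Rightarrow> 'a::comm_semiring_1"
  shows "(\<Sum>i=0..k. f i * f (k - i))
    = 2 * (\<Sum>i | i \<le> k \<and> 2 * i < k. f i * f (k - i)) + (if even k then f (k div 2) * f (k div 2) else 0)"
proof -
  define A where "A = {i. i \<le> k \<and> 2 * i < k}"
  define B where "B = {i. i \<le> k \<and> k < 2 * i}"
  define C where "C = {i. i \<le> k \<and> 2 * i = k}"
  have fin: "finite A" "finite B" "finite C"
    by (auto simp: A_def B_def C_def)
  have "{0..k} = (A \<union> B) \<union> C" by (auto simp: A_def B_def C_def)
  moreover have "A \<inter> B = {}" "(A \<union> B) \<inter> C = {}" by (auto simp: A_def B_def C_def)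
  ultimately have "(\<Sum>i=0..k. f i * f (k - i))
      = (\<Sum>i\<in>A. f i * f (k - i)) + (\<Sum>i\<in>B. f i * f (k - i)) + (\<Sum>i\<in>C. f i * f (k - i))"
    using fin by (simp add: sum.union_disjoint)
  moreover have "(\<Sum>i\<in>B. f i * f (k - i)) = (\<Sum>i\<in>A. f i * f (k - i))"
    by (rule sum.reindex_bij_witness[where i="\<lambda>i. k - i" and j="\<lambda>i. k - i"])
       (auto simp: A_def B_def mult.commute)
  moreover have "C = (if even k then {k div 2} else {})"
    by (auto simp: C_def)
  moreover have "even k \<Longrightarrow> k - k div 2 = k div 2"
    by (elim evenE) simp
  ultimately show ?thesis
    by (simp add: A_def mult_2)
qed

lemma fps_square_mod_two:
  fixes f :: "int fps"
  obtains W where "f * f = Abs_fps (\<lambda>k. if even k then f $ (k div 2) else 0) + 2 * W"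
proof
  define V where "V = Abs_fps (\<lambda>k. if even k then f $ (k div 2) else 0)"
  show "f * f = V + 2 * Abs_fps (\<lambda>k. ((f * f) $ k - V $ k) div 2)"
  proof (rule fps_ext)
    fix k
    have "(f * f) $ k = 2 * (\<Sum>i | i \<le> k \<and> 2 * i < k. f $ i * f $ (k - i))
        + (if even k then f $ (k div 2) * f $ (k div 2) else 0)"
      unfolding fps_mult_nth by (rule convolution_square_split)
    moreover have "even (x * x - x)" for x :: int
      by (cases "even x") auto
    ultimately have "even ((f * f) $ k - V $ k)"
      by (auto simp: V_def)
    then show "(f * f) $ k = (V + 2 * Abs_fps (\<lambda>k. ((f * f) $ k - V $ k) div 2)) $ k"
      by (simp add: numeral_fps_const)
  qed
qed

lemma fps_numeral_mult_nth: "(numeral c * f) $ k = numeral c * f $ k"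
  by (simp add: numeral_fps_const)

lemma inverse_expansion_mod_16:
  fixes F T U :: "'a::comm_ring_1"
  assumes "F * (1 + 2 * T) = 1 + 2 * U"
  shows "F = (1 + 2 * U) * (1 - 2 * T + 4 * T ^ 2 - 8 * T ^ 3) + 16 * T ^ 4 * F"
proof -
  have "(1 + 2 * T) * (1 - 2 * T + 4 * T ^ 2 - 8 * T ^ 3) + 16 * T ^ 4 = 1"
    by (simp add: eval_nat_numeral algebra_simps)
  then have "F = F * ((1 + 2 * T) * (1 - 2 * T + 4 * T ^ 2 - 8 * T ^ 3) + 16 * T ^ 4)"
    by simp
  also have "\<dots> = (F * (1 + 2 * T)) * (1 - 2 * T + 4 * T ^ 2 - 8 * T ^ 3) + 16 * T ^ 4 * F"
    by (simp add: algebra_simps)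
  finally show ?thesis
    by (simp only: assms)
qed

lemma s_odd_coeff:
  defines "T \<equiv> pos_theta (-1) 2" and "U \<equiv> pos_theta 1 3"
  assumes "odd N"
  shows "s N = 2 * U $ N - 4 * (U * T) $ N + 8 * (U * T ^ 2) $ N - 16 * (U * T ^ 3) $ N
               + 16 * (T ^ 4 * Abs_fps s) $ N"
proof -
  have "Abs_fps s * (1 + 2 * T) = 1 + 2 * U"
    using s_mult_theta by (simp add: theta_eq T_def U_def)
  then have "Abs_fps s = (1 + 2 * U) * (1 - 2 * T + 4 * T ^ 2 - 8 * T ^ 3) + 16 * T ^ 4 * Abs_fps s"
    by (rule inverse_expansion_mod_16)
  also have "\<dots> = (1 - 2 * T + 4 * T ^ 2 - 8 * T ^ 3) + 2 * U - 4 * (U * T) + 8 * (U * T ^ 2)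
      - 16 * (U * T ^ 3) + 16 * (T ^ 4 * Abs_fps s)"
    by (simp add: algebra_simps)
  finally have "s N = \<dots> $ N"
    by (metis fps_nth_Abs_fps)
  moreover have T_power: "(T ^ j) $ N = 0" for j
    using pos_theta_power_nth_odd[OF \<open>odd N\<close>] by (simp add: T_def)
  moreover have "(1 :: int fps) $ N = 0"
    using \<open>odd N\<close> by (cases N) auto
  ultimately show ?thesis
    using T_power[of 1] by (simp add: fps_numeral_mult_nth)
qed

lemma pos_theta_mult_nth_eq_0:
  assumes "\<forall>i j. N \<noteq> a * i * i + b * j * j"
  shows "(pos_theta c a * pos_theta d b) $ N = 0"
proof (rule ccontr)
  assume "(pos_theta c a * pos_theta d b) $ N \<noteq> 0"
  then obtain i where "i \<le> N" "pos_theta c a $ i \<noteq> 0" "pos_theta d b $ (N - i) \<noteq> 0"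
    by (elim fps_mult_nth_nonzero)
  then obtain r r' where "i = a * r * r" "N - i = b * r' * r'"
    by (metis pos_theta_nth_nonzero)
  then have "N = a * r * r + b * r' * r'"
    using \<open>i \<le> N\<close> by simp
  with assms show False by blast
qed

lemma four_dvd_s:
  assumes "odd N" and "\<forall>a. N \<noteq> 3 * a * a"
  shows "4 dvd s N"
proof -
  have "pos_theta 1 3 $ N = 0"
    using assms(2) pos_theta_nth_nonzero by blast
  then show ?thesis
    using s_odd_coeff[OF assms(1)] by (simp add: dvd_add dvd_diff)
qed

lemma eight_dvd_s:
  assumes "odd N" and "\<forall>a b. N \<noteq> 3 * a * a + 2 * b * b"
  shows "8 dvd s N"
proof -
  have "pos_theta 1 3 $ N = 0"
    using assms(2) pos_theta_nth_nonzero by (metis add_0_right mult_0_right mult_0)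
  moreover have "(pos_theta 1 3 * pos_theta (-1) 2) $ N = 0"
    using assms(2) by (rule pos_theta_mult_nth_eq_0)
  ultimately show ?thesis
    using s_odd_coeff[OF assms(1)] by (simp add: dvd_add dvd_diff)
qed

lemma sixteen_dvd_s:
  assumes "odd N" and "\<forall>a b. N \<noteq> 3 * a * a + 2 * b * b" and "\<forall>a b. N \<noteq> 3 * a * a + 4 * b * b"
  shows "16 dvd s N"
proof -
  define T where "T = pos_theta (-1) 2"
  define U where "U = pos_theta 1 3"
  define V where "V = Abs_fps (\<lambda>k. if even k then T $ (k div 2) else 0)"
  obtain W where TT: "T * T = V + 2 * W"
    unfolding V_def by (rule fps_square_mod_two)
  have "(U * V) $ N = 0"
  proof (rule ccontr)
    assume "(U * V) $ N \<noteq> 0"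
    then obtain i where "U $ i \<noteq> 0" "even (N - i)" "T $ ((N - i) div 2) \<noteq> 0" "i \<le> N"
      by (elim fps_mult_nth_nonzero) (auto simp: V_def split: if_splits)
    then obtain r r' where "i = 3 * r * r" "(N - i) div 2 = 2 * r' * r'"
      unfolding U_def T_def by (metis pos_theta_nth_nonzero)
    then have "N = 3 * r * r + 4 * r' * r'"
      using \<open>even (N - i)\<close> \<open>i \<le> N\<close> by (elim evenE) simp
    with assms(3) show False by blast
  qed
  moreover have "U * T ^ 2 = U * V + 2 * (U * W)"
    by (simp add: power2_eq_square TT distrib_left mult.left_commute)
  ultimately have "(U * T ^ 2) $ N = 2 * (U * W) $ N"
    by (simp add: fps_numeral_mult_nth)
  moreover have "U $ N = 0"
    using assms(2) pos_theta_nth_nonzero unfolding U_def by (metis add_0_right mult_0_right mult_0)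
  moreover have "(U * T) $ N = 0"
    unfolding U_def T_def using assms(2) by (rule pos_theta_mult_nth_eq_0)
  ultimately show ?thesis
    using s_odd_coeff[OF assms(1)] unfolding U_def T_def by (simp add: dvd_add dvd_diff)
qed

lemma square_mod_24: "(a * a) mod 24 \<in> {0, 1, 4, 9, 12, 16 :: nat}"
proof -
  have "m \<in> {0, 1, 2, 3, 4, 5, 6, 7, 8, 9, 10, 11, 12, 13, 14, 15, 16, 17, 18, 19, 20, 21, 22, 23}"
    if "m < 24" for m :: nat
    using that by (simp add: less_Suc_eq numeral_eq_Suc)
  then have "a mod 24 \<in> {0, 1, 2, 3, 4, 5, 6, 7, 8, 9, 10, 11, 12, 13, 14, 15, 16, 17, 18, 19, 20, 21, 22, 23}"
    by simp
  then have "(a mod 24 * (a mod 24)) mod 24 \<in> {0, 1, 4, 9, 12, 16}"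
    by (elim insertE emptyE; simp)
  then show ?thesis
    by (simp add: mod_mult_eq)
qed

lemma linear_mod_24: "(c * x + d * y) mod 24 = (c * (x mod 24) + d * (y mod 24)) mod (24 :: nat)"
proof -
  have "(c * x + d * y) mod 24 = ((c * x) mod 24 + (d * y) mod 24) mod 24"
    by (rule mod_add_eq[symmetric])
  also have "\<dots> = ((c * (x mod 24)) mod 24 + (d * (y mod 24)) mod 24) mod 24"
    by (simp only: mod_mult_right_eq)
  also have "\<dots> = (c * (x mod 24) + d * (y mod 24)) mod 24"
    by (rule mod_add_eq)
  finally show ?thesis .
qed

lemma three_square_mod_24: "(3 * a * a) mod 24 \<in> {0, 3, 12 :: nat}"
proof -
  have enum: "\<And>x :: nat. x \<in> {0, 1, 4, 9, 12, 16} \<Longrightarrow> (3 * x) mod 24 \<in> {0, 3, 12}"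
    by (elim insertE emptyE; simp)
  show ?thesis
    unfolding mult.assoc mod_mult_right_eq[of 3 "a * a" 24, symmetric]
    by (rule enum[OF square_mod_24])
qed

lemma three_square_plus_two_square_mod_24: "(3 * a * a + 2 * b * b) mod 24 \<notin> {1, 13, 17, 23 :: nat}"
proof -
  have enum: "\<And>x y :: nat. x \<in> {0, 1, 4, 9, 12, 16} \<Longrightarrow> y \<in> {0, 1, 4, 9, 12, 16}
      \<Longrightarrow> (3 * x + 2 * y) mod 24 \<notin> {1, 13, 17, 23}"
    by (elim insertE emptyE; simp)
  show ?thesis
    unfolding mult.assoc linear_mod_24[of 3 "a * a" 2 "b * b"]
    by (rule enum[OF square_mod_24 square_mod_24])
qed

lemma three_square_plus_four_square_mod_24: "(3 * a * a + 4 * b * b) mod 24 \<notin> {1, 13 :: nat}"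
proof -
  have enum: "\<And>x y :: nat. x \<in> {0, 1, 4, 9, 12, 16} \<Longrightarrow> y \<in> {0, 1, 4, 9, 12, 16}
      \<Longrightarrow> (3 * x + 4 * y) mod 24 \<notin> {1, 13}"
    by (elim insertE emptyE; simp)
  show ?thesis
    unfolding mult.assoc linear_mod_24[of 3 "a * a" 4 "b * b"]
    by (rule enum[OF square_mod_24 square_mod_24])
qed

theorem theorem8:
  fixes n :: nat
  shows "4 dvd s (24 * n + 9) \<and> 4 dvd s (24 * n + 15) \<and> 4 dvd s (24 * n + 21) \<and>
         8 dvd s (24 * n + 23) \<and> 8 dvd s (24 * n + 17) \<and> 16 dvd s (12 * n + 1)"
proof -
  have not_three_square: "N \<noteq> 3 * a * a" if "N mod 24 \<in> {9, 15, 21}" for N a :: nat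
    using three_square_mod_24[of a] that by auto
  have not_three_square_plus_two_square: "N \<noteq> 3 * a * a + 2 * b * b"
    if "N mod 24 \<in> {1, 13, 17, 23}" for N a b :: nat
    using three_square_plus_two_square_mod_24[of a b] that by auto
  have not_three_square_plus_four_square: "N \<noteq> 3 * a * a + 4 * b * b"
    if "N mod 24 \<in> {1, 13}" for N a b :: nat
    using three_square_plus_four_square_mod_24[of a b] that by auto
  have "4 dvd s (24 * n + i)" if "i \<in> {9, 15, 21}" for i
    using that by (intro four_dvd_s allI not_three_square) auto
  moreover have "8 dvd s (24 * n + i)" if "i \<in> {17, 23}" for i
    using that by (intro eight_dvd_s allI not_three_square_plus_two_square) auto
  moreover have "(12 * n + 1) mod 24 \<in> {1, 13}"
    by (cases "even n") (auto elim!: evenE oddE)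
  then have "16 dvd s (12 * n + 1)"
    by (intro sixteen_dvd_s allI not_three_square_plus_two_square not_three_square_plus_four_square) auto
  ultimately show ?thesis
    by simp
qed

end
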